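(* Let $X$ be a compact topological space equipped with a continuous action of an infinite strongly sofic monoid $M$, and let $\Sigma=(D_i,\sigma_i)_{i\in I}$ be a strong sofic approximation of $M$. If $\rho$ and $\rho'$ are dynamically generating continuous pseudometrics for $(X,M)$, then $h_\Sigma(X,M,\rho)=h_\Sigma(X,M,\rho')$.
   Context: Hamming metric on $\operatorname{Map}(D)$ (maps $D\to D$, $D$ finite non-empty): $d_D^{\mathrm{Ham}}(f,g)=\frac{1}{|D|}|\{v:f(v)\ne g(v)\}|$. A strong sofic approximation of $M$ is a net $(D_i,\sigma_i)_{i\in I}$ over a directed set, $D_i$ non-empty finite, $\sigma_i\colon M\to\operatorname{Map}(D_i)$, with $\sigma_i(1_M)=\mathrm{Id}_{D_i}$; $\lim_i d^{\mathrm{Ham}}_{D_i}(\sigma_i(m_1m_2),\sigma_i(m_1)\sigma_i(m_2))=0$ for all $m_1,m_2$; $\lim_i d^{\mathrm{Ham}}_{D_i}(\sigma_i(m_1),\sigma_i(m_2))=1$ for distinct $m_1,m_2$; and for every finite $K\subset M$ an integer $\Delta_K\ge1$ with $|\sigma_i(k)^{-1}(v)|\le\Delta_K$ for all $i$, $k\in K$, $v\in D_i$. A monoid is strongly sofic iff it has one. A pseudometric $\rho$ is dynamically generating if for distinct $x,y\in X$ some $m\in M$ has $\rho(mx,my)>0$. For non-empty finite $D$, on $X^D$: $\rho_2^D(\varphi,\psi)=(\frac{1}{|D|}\sum_v\rho(\varphi(v),\psi(v))^2)^{1/2}$, $\rho_\infty^D(\varphi,\psi)=\max_v\rho(\varphi(v),\psi(v))$,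 $(m\varphi)(v)=m\varphi(v)$. For finite $F\subset M$, $\delta>0$, $\sigma\colon M\to\operatorname{Map}(D)$: $\operatorname{Map}(X,M,\rho,F,\delta,\sigma)=\{\varphi\in X^D:\rho_2^D(\varphi\circ\sigma(m),m\varphi)\le\delta\ \forall m\in F\}$. $N_\varepsilon(Z,d)$ is the maximal cardinality of a subset of $Z$ with pairwise $d$-distances $\ge\varepsilon$. $h_\Sigma(X,M,\rho)=\sup_{\varepsilon>0}\inf_F\inf_{\delta>0}\limsup_i\frac{1}{|D_i|}\log N_\varepsilon(\operatorname{Map}(X,M,\rho,F,\delta,\sigma_i),\rho_\infty^{D_i})$, infimum over finite $F\subset M$, $\log 0=-\infty$. *)

theory Defs
  imports "HOL-Analysis.Analysis"
begin

definition directed_set :: "('i \<Rightarrow> 'i \<Rightarrow> bool) \<Rightarrow> bool" where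
  "directed_set le \<longleftrightarrow> (\<forall>i. le i i) \<and> (\<forall>i j k. le i j \<longrightarrow> le j k \<longrightarrow> le i k)
     \<and> (\<forall>i j. \<exists>k. le i k \<and> le j k)"

definition net_filter :: "('i \<Rightarrow> 'i \<Rightarrow> bool) \<Rightarrow> 'i filter" where
  "net_filter le = (INF i0. principal {i. le i0 i})"

definition continuous_monoid_action :: "('m::monoid_mult \<Rightarrow> 'x::topological_space \<Rightarrow> 'x) \<Rightarrow> bool" where
  "continuous_monoid_action act \<longleftrightarrow>
     (\<forall>x. act 1 x = x) \<and> (\<forall>m1 m2 x. act (m1 * m2) x = act m1 (act m2 x))
     \<and> (\<forall>m. continuous_on UNIV (act m))"

definition ham_dist :: "'d set \<Rightarrow> ('d \<Rightarrow> 'd) \<Rightarrow> ('d \<Rightarrow> 'd) \<Rightarrow> real" where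
  "ham_dist D f g = real (card {v\<in>D. f v \<noteq> g v}) / real (card D)"

text \<open>A net (D i, \<sigma> i) over the directed set (UNIV, le); each \<sigma> i m is a map
  D i \<rightarrow> D i (its values outside D i are irrelevant).\<close>
definition strong_sofic_approx ::
  "('i \<Rightarrow> 'i \<Rightarrow> bool) \<Rightarrow> ('i \<Rightarrow> 'd set) \<Rightarrow> ('i \<Rightarrow> 'm::monoid_mult \<Rightarrow> 'd \<Rightarrow> 'd) \<Rightarrow> bool" where
  "strong_sofic_approx le D \<sigma> \<longleftrightarrow>
     directed_set le
     \<and> (\<forall>i. finite (D i) \<and> D i \<noteq> {})
     \<and> (\<forall>i m. \<sigma> i m ` D i \<subseteq> D i)
     \<and> (\<forall>i. \<forall>v\<in>D i. \<sigma> i 1 v = v)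
     \<and> (\<forall>m1 m2. ((\<lambda>i. ham_dist (D i) (\<sigma> i (m1 * m2)) (\<sigma> i m1 \<circ> \<sigma> i m2)) \<longlongrightarrow> 0) (net_filter le))
     \<and> (\<forall>m1 m2. m1 \<noteq> m2 \<longrightarrow> ((\<lambda>i. ham_dist (D i) (\<sigma> i m1) (\<sigma> i m2)) \<longlongrightarrow> 1) (net_filter le))
     \<and> (\<forall>K. finite K \<longrightarrow> (\<exists>\<Delta>::nat. \<Delta> \<ge> 1 \<and>
           (\<forall>i. \<forall>k\<in>K. \<forall>v\<in>D i. card {w\<in>D i. \<sigma> i k w = v} \<le> \<Delta>)))"

definition strongly_sofic :: "'m::monoid_mult itself \<Rightarrow> bool" where
  "strongly_sofic (_::'m itself) \<longleftrightarrow>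
     (\<exists>(le::'m set \<times> nat \<Rightarrow> 'm set \<times> nat \<Rightarrow> bool) (D::'m set \<times> nat \<Rightarrow> nat set)
          (\<sigma>::'m set \<times> nat \<Rightarrow> 'm \<Rightarrow> nat \<Rightarrow> nat).
        strong_sofic_approx le D \<sigma>)"

definition pseudometric :: "('x \<Rightarrow> 'x \<Rightarrow> real) \<Rightarrow> bool" where
  "pseudometric \<rho> \<longleftrightarrow> (\<forall>x y. 0 \<le> \<rho> x y) \<and> (\<forall>x. \<rho> x x = 0) \<and> (\<forall>x y. \<rho> x y = \<rho> y x)
     \<and> (\<forall>x y z. \<rho> x z \<le> \<rho> x y + \<rho> y z)"

definition continuous_pseudometric :: "('x::topological_space \<Rightarrow> 'x \<Rightarrow> real) \<Rightarrow> bool" where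
  "continuous_pseudometric \<rho> \<longleftrightarrow> pseudometric \<rho> \<and> continuous_on UNIV (\<lambda>(x, y). \<rho> x y)"

definition dynamically_generating :: "('m \<Rightarrow> 'x \<Rightarrow> 'x) \<Rightarrow> ('x \<Rightarrow> 'x \<Rightarrow> real) \<Rightarrow> bool" where
  "dynamically_generating act \<rho> \<longleftrightarrow> (\<forall>x y. x \<noteq> y \<longrightarrow> (\<exists>m. \<rho> (act m x) (act m y) > 0))"

definition rho2 :: "'d set \<Rightarrow> ('x \<Rightarrow> 'x \<Rightarrow> real) \<Rightarrow> ('d \<Rightarrow> 'x) \<Rightarrow> ('d \<Rightarrow> 'x) \<Rightarrow> real" where
  "rho2 D \<rho> \<phi> \<psi> = sqrt ((\<Sum>v\<in>D. (\<rho> (\<phi> v) (\<psi> v))^2) / real (card D))"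

definition rho_inf :: "'d set \<Rightarrow> ('x \<Rightarrow> 'x \<Rightarrow> real) \<Rightarrow> ('d \<Rightarrow> 'x) \<Rightarrow> ('d \<Rightarrow> 'x) \<Rightarrow> real" where
  "rho_inf D \<rho> \<phi> \<psi> = Max ((\<lambda>v. \<rho> (\<phi> v) (\<psi> v)) ` D)"

text \<open>X^D is represented by the extensional functions on D (PiE D UNIV).\<close>
definition Map_set ::
  "('m \<Rightarrow> 'x \<Rightarrow> 'x) \<Rightarrow> ('x \<Rightarrow> 'x \<Rightarrow> real) \<Rightarrow> 'm set \<Rightarrow> real \<Rightarrow> 'd set \<Rightarrow> ('m \<Rightarrow> 'd \<Rightarrow> 'd)
     \<Rightarrow> ('d \<Rightarrow> 'x) set" where
  "Map_set act \<rho> F \<delta> D \<sigma> =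
     {\<phi> \<in> D \<rightarrow>\<^sub>E (UNIV::'x set). \<forall>m\<in>F. rho2 D \<rho> (\<phi> \<circ> \<sigma> m) (\<lambda>v. act m (\<phi> v)) \<le> \<delta>}"

definition sep_number :: "real \<Rightarrow> 'a set \<Rightarrow> ('a \<Rightarrow> 'a \<Rightarrow> real) \<Rightarrow> ereal" where
  "sep_number \<epsilon> Z d = (SUP S\<in>{S. S \<subseteq> Z \<and> finite S \<and> (\<forall>a\<in>S. \<forall>b\<in>S. a \<noteq> b \<longrightarrow> d a b \<ge> \<epsilon>)}.
       ereal (real (card S)))"

definition elog :: "ereal \<Rightarrow> ereal" where
  "elog x = (if x = 0 then -\<infinity> else if x = \<infinity> then \<infinity> else ereal (ln (real_of_ereal x)))"

definition sofic_entropy ::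
  "('i \<Rightarrow> 'i \<Rightarrow> bool) \<Rightarrow> ('i \<Rightarrow> 'd set) \<Rightarrow> ('i \<Rightarrow> 'm \<Rightarrow> 'd \<Rightarrow> 'd)
     \<Rightarrow> ('m \<Rightarrow> 'x \<Rightarrow> 'x) \<Rightarrow> ('x \<Rightarrow> 'x \<Rightarrow> real) \<Rightarrow> ereal" where
  "sofic_entropy le D \<sigma> act \<rho> =
     (SUP \<epsilon>\<in>{0<..}. INF F\<in>{F. finite F}. INF \<delta>\<in>{0<..}.
        Limsup (net_filter le) (\<lambda>i. ereal (1 / real (card (D i))) *
           elog (sep_number \<epsilon> (Map_set act \<rho> F \<delta> (D i) (\<sigma> i)) (rho_inf (D i) \<rho>))))"

end

theory Submission
  imports Defs
begin

text \<open>
  By symmetry it suffices to show that the entropy for \<open>\<rho>'\<close> is at most the one for \<open>\<rho>\<close>.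
  Compactness and dynamical generation of \<open>\<rho>\<close> give, for each \<open>\<epsilon> > 0\<close>, a finite \<open>F\<^sub>0\<close> and
  \<open>\<eta> > 0\<close> such that \<open>\<rho>(s x, s y) < \<eta>\<close> for all \<open>s \<in> F\<^sub>0\<close> forces \<open>\<rho>'(x, y) < \<epsilon>\<close>. The same
  statement with \<open>\<rho>\<close> and \<open>\<rho>'\<close> exchanged, together with multiplicativity and bounded fibres of
  the sofic approximation, shows that maps which are approximately equivariant for \<open>\<rho>'\<close> (for a
  large \<open>F'\<close> and small \<open>\<delta>'\<close>) are eventually approximately equivariant for \<open>\<rho>\<close> (for any given
  \<open>F\<close>, \<open>\<delta>\<close>).
  Label each map \<open>\<phi>\<close> by the sparse set of points \<open>v\<close> where it fails to be \<open>\<eta>/3\<close>-equivariant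
  for some \<open>s \<in> F\<^sub>0\<close>, together with a \<open>\<rho>'\<close>-cell of diameter \<open>< \<epsilon>\<close> containing \<open>\<phi> v\<close> there.
  Two maps with the same label that are \<open>\<epsilon>\<close>-apart in \<open>\<rho>'\<^sub>\<infinity>\<close> are \<open>\<eta>/3\<close>-apart in \<open>\<rho>\<^sub>\<infinity>\<close>,
  and there are only \<open>exp(\<theta> |D\<^sub>i|)\<close> labels with \<open>\<theta>\<close> arbitrarily small. Hence the \<open>\<epsilon>\<close>-rate
  for \<open>\<rho>'\<close> is at most the \<open>\<eta>/3\<close>-rate for \<open>\<rho>\<close> plus \<open>\<theta>\<close>.
\<close>

lemma eventually_net_filter:
  assumes "directed_set le"
  shows "eventually P (net_filter le) \<longleftrightarrow> (\<exists>i0. \<forall>i. le i0 i \<longrightarrow> P i)"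
proof -
  have "eventually P (INF i0. principal {i. le i0 i}) \<longleftrightarrow> (\<exists>i0\<in>UNIV. eventually P (principal {i. le i0 i}))"
  proof (rule eventually_INF_base)
    fix a b :: 'a
    obtain k where "le a k" "le b k"
      using assms unfolding directed_set_def by blast
    then have "{i. le k i} \<subseteq> {i. le a i} \<inter> {i. le b i}"
      using assms unfolding directed_set_def by blast
    then show "\<exists>k\<in>UNIV. principal {i. le k i} \<le> inf (principal {i. le a i}) (principal {i. le b i})"
      by auto
  qed simp
  then show ?thesis
    unfolding net_filter_def by (simp add: eventually_principal)
qed

lemma net_filter_ne_bot:
  assumes "directed_set le"
  shows "net_filter le \<noteq> bot"
  using assms eventually_net_filter[OF assms, of "\<lambda>_. False"]
  unfolding directed_set_def by (auto simp: trivial_limit_def)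

lemma continuous_monoid_actionD:
  assumes "continuous_monoid_action act"
  shows "act (s * m) x = act s (act m x)" and "continuous_on UNIV (act s)"
  using assms unfolding continuous_monoid_action_def by blast+

lemma strong_sofic_approxD:
  assumes "strong_sofic_approx le D \<sigma>"
  shows "directed_set le" and "finite (D i)" and "D i \<noteq> {}" and "v \<in> D i \<Longrightarrow> \<sigma> i s v \<in> D i"
    and "((\<lambda>i. ham_dist (D i) (\<sigma> i (m1 * m2)) (\<sigma> i m1 \<circ> \<sigma> i m2)) \<longlongrightarrow> 0) (net_filter le)"
  using assms unfolding strong_sofic_approx_def by (auto simp: image_subset_iff)

lemma strong_sofic_approx_fibres_bounded:
  assumes "strong_sofic_approx le D \<sigma>" "finite K"
  obtains \<Delta> where "\<And>i k v. k \<in> K \<Longrightarrow> v \<in> D i \<Longrightarrow> card {w\<in>D i. \<sigma> i k w = v} \<le> \<Delta>"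
  using assms unfolding strong_sofic_approx_def by metis

section \<open>Continuous pseudometrics on compact spaces\<close>

lemma pseudometricD:
  assumes "pseudometric \<rho>"
  shows pseudometric_nonneg: "0 \<le> \<rho> x y"
    and pseudometric_refl: "\<rho> x x = 0"
    and pseudometric_sym: "\<rho> x y = \<rho> y x"
    and pseudometric_triangle: "\<rho> x y \<le> \<rho> x z + \<rho> z y"
  using assms unfolding pseudometric_def by blast+

lemma pseudometric_less_of_half:
  assumes "pseudometric \<rho>" "\<rho> z x < e / 2" "\<rho> z y < e / 2"
  shows "\<rho> x y < e"
  using assms(2,3) pseudometric_triangle[OF assms(1), of x y z] pseudometric_sym[OF assms(1), of x z]
  by linarith

lemma continuous_pseudometricD:
  assumes "continuous_pseudometric \<rho>"
  shows "pseudometric \<rho>" and "continuous_on UNIV (\<lambda>(x, y). \<rho> x y)"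
  using assms unfolding continuous_pseudometric_def by blast+

lemma continuous_on_pseudometric_compose:
  assumes "continuous_pseudometric \<rho>" "continuous_on UNIV f" "continuous_on UNIV g"
  shows "continuous_on UNIV (\<lambda>p. \<rho> (f p) (g p))"
proof -
  have "continuous_on UNIV (\<lambda>p. (\<lambda>(x, y). \<rho> x y) (f p, g p))"
    using continuous_pseudometricD(2)[OF assms(1)]
    by (rule continuous_on_compose2) (auto intro: continuous_on_Pair assms(2,3))
  then show ?thesis by simp
qed

lemma continuous_pseudometric_bounded:
  assumes "compact (UNIV :: 'x::topological_space set)" "continuous_pseudometric (\<rho> :: 'x \<Rightarrow> 'x \<Rightarrow> real)"
  obtains R where "\<And>x y. \<rho> x y \<le> R"
proof -
  have "compact (UNIV \<times> UNIV :: ('x \<times> 'x) set)"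
    using compact_Times[OF assms(1) assms(1)] .
  then have "bounded (range (\<lambda>(x, y). \<rho> x y))"
    using continuous_pseudometricD(2)[OF assms(2)]
    by (intro compact_imp_bounded compact_continuous_image) auto
  then obtain a where "\<And>x y. \<bar>\<rho> x y\<bar> \<le> a"
    unfolding bounded_iff by fastforce
  then have "\<rho> x y \<le> a" for x y
    by (rule abs_le_D1)
  then show ?thesis
    by (rule that)
qed

lemma continuous_pseudometric_finite_net:
  assumes "compact (UNIV :: 'x::topological_space set)" "continuous_pseudometric (\<rho> :: 'x \<Rightarrow> 'x \<Rightarrow> real)"
    and "e > 0"
  obtains C where "finite C" "\<And>x. \<exists>c\<in>C. \<rho> c x < e"
proof -
  have "open {y. \<rho> c y < e}" for c
    by (intro open_Collect_less continuous_on_pseudometric_compose[OF assms(2)] continuous_intros)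
  moreover have "UNIV \<subseteq> (\<Union>c. {y. \<rho> c y < e})"
    using pseudometric_refl[OF continuous_pseudometricD(1)[OF assms(2)]] assms(3) by auto
  ultimately obtain C where "C \<subseteq> UNIV" "finite C" "UNIV \<subseteq> (\<Union>c\<in>C. {y. \<rho> c y < e})"
    by (rule compactE_image[OF assms(1)])
  then show ?thesis
    by (intro that) auto
qed

lemma continuous_pseudometric_finite_partition:
  fixes \<rho> :: "'x::topological_space \<Rightarrow> 'x \<Rightarrow> real"
  assumes "compact (UNIV :: 'x set)" "continuous_pseudometric \<rho>"
    and "e > 0"
  obtains cell :: "'x \<Rightarrow> 'x" where "finite (range cell)" "\<And>x y. cell x = cell y \<Longrightarrow> \<rho> x y < e"
proof -
  have "e / 2 > 0"
    using assms(3) by simp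
  then obtain C where "finite C" and net: "\<And>x. \<exists>c\<in>C. \<rho> c x < e / 2"
    using continuous_pseudometric_finite_net[OF assms(1,2)] by blast
  then have "\<forall>x. \<exists>c. c \<in> C \<and> \<rho> c x < e / 2"
    by blast
  then obtain cell where cell: "\<And>x. cell x \<in> C" "\<And>x. \<rho> (cell x) x < e / 2"
    using choice[of "\<lambda>x c. c \<in> C \<and> \<rho> c x < e / 2"] by blast
  show ?thesis
  proof (rule that)
    have "range cell \<subseteq> C"
      using cell(1) by blast
    then show "finite (range cell)"
      using \<open>finite C\<close> by (rule finite_subset)
    show "\<rho> x y < e" if "cell x = cell y" for x y
    proof (rule pseudometric_less_of_half[OF continuous_pseudometricD(1)[OF assms(2)]])
      show "\<rho> (cell x) x < e / 2" "\<rho> (cell x) y < e / 2"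
        using cell(2)[of x] cell(2)[of y] that by simp_all
    qed
  qed
qed

lemma compact_pseudometric_superlevel:
  assumes "compact (UNIV :: 'x::topological_space set)" "continuous_pseudometric (\<rho> :: 'x \<Rightarrow> 'x \<Rightarrow> real)"
  shows "compact {p :: 'x \<times> 'x. \<kappa> \<le> \<rho> (fst p) (snd p)}"
proof -
  have "closed {p :: 'x \<times> 'x. \<kappa> \<le> \<rho> (fst p) (snd p)}"
    by (intro closed_Collect_le continuous_on_pseudometric_compose[OF assms(2)] continuous_intros)
  moreover have "compact (UNIV :: ('x \<times> 'x) set)"
    using compact_Times[OF assms(1) assms(1)] by simp
  ultimately show ?thesis
    using closed_Int_compact[of "{p :: 'x \<times> 'x. \<kappa> \<le> \<rho> (fst p) (snd p)}" UNIV] by simp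
qed

lemma dynamically_generating_control:
  fixes act :: "'m \<Rightarrow> 'x::topological_space \<Rightarrow> 'x"
  assumes "compact (UNIV :: 'x set)" "\<And>s. continuous_on UNIV (act s)"
    and "continuous_pseudometric \<rho>" "dynamically_generating act \<rho>"
    and "continuous_pseudometric \<rho>'" "\<kappa> > 0"
  obtains F \<eta> where "finite F" "\<eta> > 0" "\<And>x y. \<forall>s\<in>F. \<rho> (act s x) (act s y) < \<eta> \<Longrightarrow> \<rho>' x y < \<kappa>"
proof -
  define K where "K = {p :: 'x \<times> 'x. \<kappa> \<le> \<rho>' (fst p) (snd p)}"
  define U where "U = (\<lambda>(s, r). {p :: 'x \<times> 'x. r < \<rho> (act s (fst p)) (act s (snd p))})"
  have "compact K"
    unfolding K_def by (rule compact_pseudometric_superlevel[OF assms(1,5)])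
  moreover have "open (U sr)" for sr
    unfolding U_def
    by (cases sr) (auto intro!: open_Collect_less continuous_on_pseudometric_compose[OF assms(3)]
        continuous_on_compose2[OF assms(2)] continuous_on_fst continuous_on_snd continuous_on_id)
  moreover have "K \<subseteq> \<Union> (U ` (UNIV \<times> {0<..}))"
  proof
    fix p assume "p \<in> K"
    then have "fst p \<noteq> snd p"
      using assms(6) pseudometric_refl[OF continuous_pseudometricD(1)[OF assms(5)]] unfolding K_def by auto
    then obtain s where "0 < \<rho> (act s (fst p)) (act s (snd p))"
      using assms(4) unfolding dynamically_generating_def by blast
    then show "p \<in> \<Union> (U ` (UNIV \<times> {0<..}))"
      unfolding U_def by (intro UN_I[of "(s, \<rho> (act s (fst p)) (act s (snd p)) / 2)"]) auto
  qed
  ultimately obtain C where C: "C \<subseteq> UNIV \<times> {0<..}" "finite C" "K \<subseteq> \<Union> (U ` C)"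
    by (rule compactE_image)
  define \<eta> where "\<eta> = Min (insert 1 (snd ` C))"
  show ?thesis
  proof (rule that[of "fst ` C" \<eta>])
    show "finite (fst ` C)" "\<eta> > 0"
      using C unfolding \<eta>_def by auto
    fix x y assume small: "\<forall>s\<in>fst ` C. \<rho> (act s x) (act s y) < \<eta>"
    show "\<rho>' x y < \<kappa>"
    proof (rule ccontr)
      assume "\<not> \<rho>' x y < \<kappa>"
      then have "(x, y) \<in> K"
        unfolding K_def by simp
      then obtain s r where "(s, r) \<in> C" "r < \<rho> (act s x) (act s y)"
        using C(3) unfolding U_def by auto
      moreover have "\<eta> \<le> r"
        using C(2) \<open>(s, r) \<in> C\<close> unfolding \<eta>_def by (auto intro!: Min_le simp: rev_image_eqI)
      ultimately show False
        using small by force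
    qed
  qed
qed

section \<open>Counting\<close>

lemma card_bex_le:
  assumes "finite F" "\<And>s. s \<in> F \<Longrightarrow> real (card {v\<in>D. P s v}) \<le> c"
  shows "real (card {v\<in>D. \<exists>s\<in>F. P s v}) \<le> real (card F) * c"
proof -
  have "{v\<in>D. \<exists>s\<in>F. P s v} = (\<Union>s\<in>F. {v\<in>D. P s v})"
    by auto
  then have "card {v\<in>D. \<exists>s\<in>F. P s v} \<le> (\<Sum>s\<in>F. card {v\<in>D. P s v})"
    by (simp only: card_UN_le[OF assms(1)])
  then have "real (card {v\<in>D. \<exists>s\<in>F. P s v}) \<le> (\<Sum>s\<in>F. real (card {v\<in>D. P s v}))"
    unfolding of_nat_sum[symmetric] of_nat_le_iff .
  also have "\<dots> \<le> real (card F) * c"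
    using sum_mono[of F _ "\<lambda>_. c"] assms(2) by simp
  finally show ?thesis .
qed

lemma card_preimage_le:
  assumes "finite Z" "\<And>w. w \<in> Z \<Longrightarrow> card {v\<in>D. f v = w} \<le> \<Delta>"
  shows "card {v\<in>D. f v \<in> Z} \<le> \<Delta> * card Z"
proof -
  have "{v\<in>D. f v \<in> Z} = (\<Union>w\<in>Z. {v\<in>D. f v = w})"
    by auto
  then have "card {v\<in>D. f v \<in> Z} \<le> (\<Sum>w\<in>Z. card {v\<in>D. f v = w})"
    by (simp only: card_UN_le[OF assms(1)])
  also have "\<dots> \<le> \<Delta> * card Z"
    using sum_mono[of Z _ "\<lambda>_. \<Delta>"] assms(2) by (simp add: mult.commute)
  finally show ?thesis .
qed

lemma card_ge_mult_sq_le_sum_sq: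
  fixes g :: "'d \<Rightarrow> real"
  assumes "finite D" "c > 0"
  shows "real (card {v\<in>D. c \<le> g v}) * c\<^sup>2 \<le> (\<Sum>v\<in>D. (g v)\<^sup>2)"
proof -
  have "real (card {v\<in>D. c \<le> g v}) * c\<^sup>2 = (\<Sum>v\<in>{v\<in>D. c \<le> g v}. c\<^sup>2)"
    by simp
  also have "\<dots> \<le> (\<Sum>v\<in>{v\<in>D. c \<le> g v}. (g v)\<^sup>2)"
    using assms(2) by (intro sum_mono power_mono) auto
  also have "\<dots> \<le> (\<Sum>v\<in>D. (g v)\<^sup>2)"
    using assms(1) by (intro sum_mono2) auto
  finally show ?thesis .
qed

lemma sum_sq_le_off_small_set:
  fixes g :: "'d \<Rightarrow> real"
  assumes "finite D" "B \<subseteq> D" "\<And>v. v \<in> D \<Longrightarrow> 0 \<le> g v" "\<And>v. v \<in> D \<Longrightarrow> g v \<le> R"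
    and "\<And>v. v \<in> D - B \<Longrightarrow> g v < \<kappa>"
  shows "(\<Sum>v\<in>D. (g v)\<^sup>2) \<le> \<kappa>\<^sup>2 * real (card D) + R\<^sup>2 * real (card B)"
proof -
  have "(\<Sum>v\<in>D. (g v)\<^sup>2) = (\<Sum>v\<in>D - B. (g v)\<^sup>2) + (\<Sum>v\<in>B. (g v)\<^sup>2)"
    using assms(1,2) by (metis sum.subset_diff)
  also have "(\<Sum>v\<in>D - B. (g v)\<^sup>2) \<le> (\<Sum>v\<in>D. \<kappa>\<^sup>2)"
  proof -
    have "(\<Sum>v\<in>D - B. (g v)\<^sup>2) \<le> (\<Sum>v\<in>D - B. \<kappa>\<^sup>2)"
      using assms(3,5) by (intro sum_mono power_mono) (auto intro: less_imp_le)
    also have "\<dots> \<le> (\<Sum>v\<in>D. \<kappa>\<^sup>2)"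
      using assms(1) by (intro sum_mono2) auto
    finally show ?thesis .
  qed
  also have "(\<Sum>v\<in>B. (g v)\<^sup>2) \<le> (\<Sum>v\<in>B. R\<^sup>2)"
    using assms(2-4) by (intro sum_mono power_mono) auto
  finally show ?thesis
    by (simp add: mult.commute)
qed

definition sparse_patterns :: "'d set \<Rightarrow> 'a set \<Rightarrow> 'a \<Rightarrow> real \<Rightarrow> ('d \<Rightarrow> 'a) set" where
  "sparse_patterns D A a0 b = {f \<in> D \<rightarrow>\<^sub>E A. real (card {v\<in>D. f v \<noteq> a0}) \<le> b}"

lemma finite_sparse_patterns:
  "finite D \<Longrightarrow> finite A \<Longrightarrow> finite (sparse_patterns D A a0 b)"
  unfolding sparse_patterns_def by (rule finite_subset[of _ "D \<rightarrow>\<^sub>E A"]) (auto simp: finite_PiE)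

lemma const_in_sparse_patterns:
  "a0 \<in> A \<Longrightarrow> 0 \<le> b \<Longrightarrow> (\<lambda>v\<in>D. a0) \<in> sparse_patterns D A a0 b"
  unfolding sparse_patterns_def by auto

lemma card_sparse_patterns_le:
  assumes "finite D" "finite A" "a0 \<in> A" "0 < t" "t \<le> 1"
  shows "real (card (sparse_patterns D A a0 b)) \<le> t powr (-b) * (1 + real (card A) * t) ^ card D"
proof -
  \<comment> \<open>weight each pattern by \<open>t\<^bsup>k - b\<^esup> \<ge> 1\<close>, \<open>k\<close> its support size; summed over all patterns the weights factorize over \<open>D\<close>\<close>
  define k where "k f = card {v\<in>D. f v \<noteq> a0}" for f :: "'a \<Rightarrow> 'b"
  have weight: "1 \<le> t powr (-b) * t ^ k f" if "f \<in> sparse_patterns D A a0 b" for f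
  proof -
    have "1 \<le> t powr (real (k f) - b)"
      using that powr_mono'[of "real (k f) - b" 0 t] assms(4,5)
      unfolding sparse_patterns_def k_def by simp
    also have "\<dots> = t powr (-b) * t ^ k f"
      using assms(4) by (simp add: powr_add[symmetric] powr_realpow[symmetric])
    finally show ?thesis .
  qed
  have "real (card (sparse_patterns D A a0 b)) \<le> (\<Sum>f\<in>sparse_patterns D A a0 b. t powr (-b) * t ^ k f)"
    using sum_mono[OF weight] by simp
  also have "\<dots> \<le> (\<Sum>f\<in>D \<rightarrow>\<^sub>E A. t powr (-b) * t ^ k f)"
    using assms by (intro sum_mono2) (auto simp: finite_PiE sparse_patterns_def)
  also have "\<dots> = t powr (-b) * (\<Sum>f\<in>D \<rightarrow>\<^sub>E A. \<Prod>v\<in>D. if f v \<noteq> a0 then t else 1)"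
    using assms(1) by (simp add: sum_distrib_left k_def prod.If_cases Int_def)
  also have "\<dots> = t powr (-b) * (\<Prod>v\<in>D. \<Sum>a\<in>A. if a \<noteq> a0 then t else 1)"
    using prod_sum_PiE[OF assms(1) assms(2), of "\<lambda>_ a. if a \<noteq> a0 then t else 1"] by simp
  also have "\<dots> = t powr (-b) * (1 + real (card (A - {a0})) * t) ^ card D"
    using sum.remove[OF assms(2,3), of "\<lambda>a. if a \<noteq> a0 then t else 1"] by simp
  also have "\<dots> \<le> t powr (-b) * (1 + real (card A) * t) ^ card D"
    using assms(4) card_Diff1_le[of A a0] by (intro mult_left_mono power_mono) auto
  finally show ?thesis .
qed

lemma sparse_patterns_small_growth:
  assumes "finite A" "a0 \<in> A" "\<theta> > 0"
  obtains \<beta> where "\<beta> > 0"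
    "\<And>D b. finite D \<Longrightarrow> 0 \<le> b \<Longrightarrow> b \<le> \<beta> * real (card D) \<Longrightarrow>
       ln (real (card (sparse_patterns D A a0 b))) \<le> \<theta> * real (card D)"
proof -
  define t where "t = min 1 (\<theta> / (2 * (real (card A) + 1)))"
  define \<beta> where "\<beta> = \<theta> / (2 * (ln (1 / t) + 1))"
  have t: "0 < t" "t \<le> 1" and "ln (1 / t) \<ge> 0"
    using assms(3) unfolding t_def by auto
  have tA: "real (card A) * t \<le> \<theta> / 2"
  proof -
    have "t \<le> \<theta> / (2 * (real (card A) + 1))"
      unfolding t_def by simp
    then have "real (card A) * t \<le> real (card A) * (\<theta> / (2 * (real (card A) + 1)))"
      by (rule mult_left_mono) simp
    also have "\<dots> \<le> \<theta> / 2"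
      using assms(3) by (simp add: field_simps)
    finally show ?thesis .
  qed
  have \<beta>t: "\<beta> * ln (1 / t) \<le> \<theta> / 2"
    using \<open>ln (1 / t) \<ge> 0\<close> assms(3) unfolding \<beta>_def by (simp add: mult_left_le field_simps)
  show ?thesis
  proof (rule that)
    show "\<beta> > 0"
      using \<open>ln (1 / t) \<ge> 0\<close> assms(3) unfolding \<beta>_def by (simp add: add_nonneg_pos)
    fix D :: "'d set" and b
    assume D: "finite D" and b: "0 \<le> b" "b \<le> \<beta> * real (card D)"
    define n where "n = real (card D)"
    have "0 < card (sparse_patterns D A a0 b)"
      using const_in_sparse_patterns[OF assms(2) b(1)] finite_sparse_patterns[OF D assms(1)]
      by (auto simp: card_gt_0_iff)
    then have "ln (real (card (sparse_patterns D A a0 b))) \<le> ln (t powr (-b) * (1 + real (card A) * t) ^ card D)"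
      using card_sparse_patterns_le[OF D assms(1,2) t, of b] by (simp del: ln_le_cancel_iff add: ln_mono)
    also have "\<dots> = b * ln (1 / t) + n * ln (1 + real (card A) * t)"
      using t add_pos_nonneg[of 1 "real (card A) * t"] unfolding n_def by (simp add: ln_mult ln_realpow ln_div)
    also have "\<dots> \<le> (\<beta> * n) * ln (1 / t) + n * (real (card A) * t)"
      using b \<open>ln (1 / t) \<ge> 0\<close> t unfolding n_def
      by (intro add_mono mult_right_mono mult_left_mono ln_add_one_self_le_self) auto
    also have "\<dots> \<le> \<theta> * n"
      using mult_left_mono[OF \<beta>t, of n] mult_left_mono[OF tA, of n] unfolding n_def
      by (simp add: algebra_simps)
    finally show "ln (real (card (sparse_patterns D A a0 b))) \<le> \<theta> * real (card D)"
      unfolding n_def .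
  qed
qed

section \<open>Approximately equivariant maps\<close>

lemma rho2_le_iff:
  assumes "finite D" "D \<noteq> {}" "0 \<le> \<delta>"
  shows "rho2 D \<rho> \<phi> \<psi> \<le> \<delta> \<longleftrightarrow> (\<Sum>v\<in>D. (\<rho> (\<phi> v) (\<psi> v))\<^sup>2) \<le> \<delta>\<^sup>2 * real (card D)"
proof -
  have "0 < real (card D)"
    using assms by (simp add: card_gt_0_iff)
  then have "(\<Sum>v\<in>D. (\<rho> (\<phi> v) (\<psi> v))\<^sup>2) / real (card D) \<le> \<delta>\<^sup>2
      \<longleftrightarrow> (\<Sum>v\<in>D. (\<rho> (\<phi> v) (\<psi> v))\<^sup>2) \<le> \<delta>\<^sup>2 * real (card D)"
    by (simp add: pos_divide_le_eq)
  then show ?thesis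
    unfolding rho2_def using assms(3) sqrt_le_D real_le_lsqrt by blast
qed

lemma Map_set_mono:
  "F \<subseteq> F' \<Longrightarrow> \<delta>' \<le> \<delta> \<Longrightarrow> Map_set act \<rho> F' \<delta>' D \<sigma> \<subseteq> Map_set act \<rho> F \<delta> D \<sigma>"
  unfolding Map_set_def by fastforce

lemma Map_set_sum_sq_le:
  assumes "finite D" "D \<noteq> {}" "0 \<le> \<delta>" "\<phi> \<in> Map_set act \<rho> F \<delta> D \<sigma>" "m \<in> F"
  shows "(\<Sum>v\<in>D. (\<rho> (\<phi> (\<sigma> m v)) (act m (\<phi> v)))\<^sup>2) \<le> \<delta>\<^sup>2 * real (card D)"
  using assms(4,5) rho2_le_iff[OF assms(1-3), of \<rho> "\<phi> \<circ> \<sigma> m" "\<lambda>v. act m (\<phi> v)"]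
  unfolding Map_set_def by simp

lemma Map_set_card_defect_le:
  assumes "finite D" "D \<noteq> {}" "0 \<le> \<delta>" "\<phi> \<in> Map_set act \<rho> F \<delta> D \<sigma>" "m \<in> F" "c > 0"
  shows "real (card {v\<in>D. c \<le> \<rho> (\<phi> (\<sigma> m v)) (act m (\<phi> v))}) \<le> (\<delta> / c)\<^sup>2 * real (card D)"
  using order_trans[OF card_ge_mult_sq_le_sum_sq[OF assms(1,6)] Map_set_sum_sq_le[OF assms(1-5)]] assms(6)
  by (simp add: power_divide field_simps)

lemma Map_set_card_defects_le:
  assumes "finite D" "D \<noteq> {}" "0 \<le> \<delta>" "\<phi> \<in> Map_set act \<rho> F \<delta> D \<sigma>" "finite F" "c > 0"
  shows "real (card {v\<in>D. \<exists>s\<in>F. c \<le> \<rho> (\<phi> (\<sigma> s v)) (act s (\<phi> v))})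
           \<le> real (card F) * (\<delta> / c)\<^sup>2 * real (card D)"
proof -
  have "real (card {v\<in>D. \<exists>s\<in>F. c \<le> \<rho> (\<phi> (\<sigma> s v)) (act s (\<phi> v))})
      \<le> real (card F) * ((\<delta> / c)\<^sup>2 * real (card D))"
    by (rule card_bex_le[OF assms(5)]) (rule Map_set_card_defect_le[OF assms(1-4) _ assms(6)])
  then show ?thesis
    by (simp only: mult.assoc)
qed

lemma Map_set_card_preimage_defect_le:
  assumes "finite D" "D \<noteq> {}" "0 \<le> \<delta>" "\<phi> \<in> Map_set act \<rho> F \<delta> D \<sigma>" "s \<in> F" "c > 0"
    and fibre: "\<And>w. w \<in> D \<Longrightarrow> card {v\<in>D. f v = w} \<le> \<Delta>"
  shows "real (card {v\<in>D. f v \<in> {w\<in>D. c \<le> \<rho> (\<phi> (\<sigma> s w)) (act s (\<phi> w))}})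
           \<le> real \<Delta> * ((\<delta> / c)\<^sup>2 * real (card D))"
proof -
  have "card {v\<in>D. f v \<in> {w\<in>D. c \<le> \<rho> (\<phi> (\<sigma> s w)) (act s (\<phi> w))}}
      \<le> \<Delta> * card {w\<in>D. c \<le> \<rho> (\<phi> (\<sigma> s w)) (act s (\<phi> w))}"
    using fibre assms(1) by (intro card_preimage_le) auto
  then have "real (card {v\<in>D. f v \<in> {w\<in>D. c \<le> \<rho> (\<phi> (\<sigma> s w)) (act s (\<phi> w))}})
      \<le> real \<Delta> * real (card {w\<in>D. c \<le> \<rho> (\<phi> (\<sigma> s w)) (act s (\<phi> w))})"
    unfolding of_nat_mult[symmetric] of_nat_le_iff .
  also have "\<dots> \<le> real \<Delta> * ((\<delta> / c)\<^sup>2 * real (card D))"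
    using Map_set_card_defect_le[OF assms(1-6)] by (intro mult_left_mono) simp_all
  finally show ?thesis .
qed

lemma card_ham_dist:
  "finite D \<Longrightarrow> D \<noteq> {} \<Longrightarrow> real (card {v\<in>D. f v \<noteq> g v}) = ham_dist D f g * real (card D)"
  unfolding ham_dist_def by simp

lemma Map_set_card_shifted_defect_le:
  fixes act :: "'m::monoid_mult \<Rightarrow> 'x \<Rightarrow> 'x" and \<sigma> :: "'m \<Rightarrow> 'd \<Rightarrow> 'd"
  assumes pm: "pseudometric \<rho>"
    and D: "finite D" "D \<noteq> {}" "\<And>s v. v \<in> D \<Longrightarrow> \<sigma> s v \<in> D"
    and act_mult: "\<And>x. act (s * m) x = act s (act m x)"
    and \<phi>: "\<phi> \<in> Map_set act \<rho> F \<delta> D \<sigma>" "s \<in> F" "s * m \<in> F" and "0 \<le> \<delta>" "0 < \<eta>"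
    and fibre: "\<And>w. w \<in> D \<Longrightarrow> card {v\<in>D. \<sigma> m v = w} \<le> \<Delta>"
  shows "real (card {v\<in>D. \<eta> \<le> \<rho> (act s (\<phi> (\<sigma> m v))) (act s (act m (\<phi> v)))})
           \<le> (ham_dist D (\<sigma> (s * m)) (\<sigma> s \<circ> \<sigma> m) + (1 + real \<Delta>) * (2 * \<delta> / \<eta>)\<^sup>2) * real (card D)"
proof -
  define q where "q = (2 * \<delta> / \<eta>)\<^sup>2 * real (card D)"
  define Ha where "Ha = {v\<in>D. \<sigma> (s * m) v \<noteq> (\<sigma> s \<circ> \<sigma> m) v}"
  define Hb where "Hb = {v\<in>D. \<eta> / 2 \<le> \<rho> (\<phi> (\<sigma> (s * m) v)) (act (s * m) (\<phi> v))}"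
  define Z where "Z = {w\<in>D. \<eta> / 2 \<le> \<rho> (\<phi> (\<sigma> s w)) (act s (\<phi> w))}"
  define Hc where "Hc = {v\<in>D. \<sigma> m v \<in> Z}"
  have q: "(\<delta> / (\<eta> / 2))\<^sup>2 * real (card D) = q"
    unfolding q_def by (simp add: ac_simps)
  have Hb: "real (card Hb) \<le> q"
    unfolding Hb_def q[symmetric] using \<open>0 < \<eta>\<close>
    by (intro Map_set_card_defect_le[OF D(1,2) \<open>0 \<le> \<delta>\<close> \<phi>(1) \<phi>(3)]) simp
  have Hc: "real (card Hc) \<le> real \<Delta> * q"
    unfolding Hc_def Z_def q[symmetric] using \<open>0 < \<eta>\<close>
    by (intro Map_set_card_preimage_defect_le[OF D(1,2) \<open>0 \<le> \<delta>\<close> \<phi>(1) \<phi>(2) _ fibre]) simp_all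
  \<comment> \<open>off \<open>Ha \<union> Hb \<union> Hc\<close>, both \<open>s(\<phi>(\<sigma>\<^sub>m v))\<close> and \<open>s(m(\<phi> v))\<close> are \<open>\<eta>/2\<close>-close to \<open>\<phi>(\<sigma>\<^sub>s(\<sigma>\<^sub>m v)) = \<phi>(\<sigma>\<^sub>s\<^sub>m v)\<close>\<close>
  have "{v\<in>D. \<eta> \<le> \<rho> (act s (\<phi> (\<sigma> m v))) (act s (act m (\<phi> v)))} \<subseteq> Ha \<union> Hb \<union> Hc"
  proof (rule subsetI, rule ccontr)
    fix v assume v: "v \<in> {v\<in>D. \<eta> \<le> \<rho> (act s (\<phi> (\<sigma> m v))) (act s (act m (\<phi> v)))}"
      and "v \<notin> Ha \<union> Hb \<union> Hc"
    then have "\<rho> (\<phi> (\<sigma> s (\<sigma> m v))) (act s (\<phi> (\<sigma> m v))) < \<eta> / 2"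
      and "\<rho> (\<phi> (\<sigma> s (\<sigma> m v))) (act s (act m (\<phi> v))) < \<eta> / 2"
      using D(3) by (auto simp: Ha_def Hb_def Hc_def Z_def act_mult)
    then have "\<rho> (act s (\<phi> (\<sigma> m v))) (act s (act m (\<phi> v))) < \<eta>"
      by (rule pseudometric_less_of_half[OF pm])
    then show False
      using v by simp
  qed
  then have "card {v\<in>D. \<eta> \<le> \<rho> (act s (\<phi> (\<sigma> m v))) (act s (act m (\<phi> v)))} \<le> card (Ha \<union> Hb \<union> Hc)"
    using D(1) by (intro card_mono) (auto simp: Ha_def Hb_def Hc_def)
  also have "\<dots> \<le> card Ha + card Hb + card Hc"
    using card_Un_le[of "Ha \<union> Hb" Hc] card_Un_le[of Ha Hb] by linarith
  finally have "real (card {v\<in>D. \<eta> \<le> \<rho> (act s (\<phi> (\<sigma> m v))) (act s (act m (\<phi> v)))})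
      \<le> real (card Ha) + real (card Hb) + real (card Hc)"
    by linarith
  moreover have "real (card Ha) = ham_dist D (\<sigma> (s * m)) (\<sigma> s \<circ> \<sigma> m) * real (card D)"
    unfolding Ha_def by (rule card_ham_dist[OF D(1,2)])
  ultimately show ?thesis
    using Hb Hc unfolding q_def by (simp add: algebra_simps)
qed

lemma Map_set_card_shifted_defects_le:
  fixes act :: "'m::monoid_mult \<Rightarrow> 'x \<Rightarrow> 'x" and \<sigma> :: "'m \<Rightarrow> 'd \<Rightarrow> 'd"
  assumes pm: "pseudometric \<rho>"
    and D: "finite D" "D \<noteq> {}" "\<And>s v. v \<in> D \<Longrightarrow> \<sigma> s v \<in> D"
    and act_mult: "\<And>s m x. act (s * m) x = act s (act m x)"
    and \<phi>: "\<phi> \<in> Map_set act \<rho> F \<delta> D \<sigma>" and F0: "finite F0" "F0 \<subseteq> F" "(\<lambda>s. s * m) ` F0 \<subseteq> F"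
    and "0 \<le> \<delta>" "0 < \<eta>"
    and fibre: "\<And>w. w \<in> D \<Longrightarrow> card {v\<in>D. \<sigma> m v = w} \<le> \<Delta>"
    and ham: "\<And>s. s \<in> F0 \<Longrightarrow> ham_dist D (\<sigma> (s * m)) (\<sigma> s \<circ> \<sigma> m) \<le> \<gamma>"
  shows "real (card {v\<in>D. \<exists>s\<in>F0. \<eta> \<le> \<rho> (act s (\<phi> (\<sigma> m v))) (act s (act m (\<phi> v)))})
           \<le> real (card F0) * ((\<gamma> + (1 + real \<Delta>) * (2 * \<delta> / \<eta>)\<^sup>2) * real (card D))"
proof (rule card_bex_le[OF F0(1)])
  fix s assume "s \<in> F0"
  have "real (card {v\<in>D. \<eta> \<le> \<rho> (act s (\<phi> (\<sigma> m v))) (act s (act m (\<phi> v)))})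
      \<le> (ham_dist D (\<sigma> (s * m)) (\<sigma> s \<circ> \<sigma> m) + (1 + real \<Delta>) * (2 * \<delta> / \<eta>)\<^sup>2) * real (card D)"
    by (rule Map_set_card_shifted_defect_le[OF pm D act_mult \<phi>])
      (use \<open>s \<in> F0\<close> F0 \<open>0 \<le> \<delta>\<close> \<open>0 < \<eta>\<close> fibre in auto)
  also have "\<dots> \<le> (\<gamma> + (1 + real \<Delta>) * (2 * \<delta> / \<eta>)\<^sup>2) * real (card D)"
    using ham[OF \<open>s \<in> F0\<close>] by (intro mult_right_mono add_right_mono) auto
  finally show "real (card {v\<in>D. \<eta> \<le> \<rho> (act s (\<phi> (\<sigma> m v))) (act s (act m (\<phi> v)))})
      \<le> (\<gamma> + (1 + real \<Delta>) * (2 * \<delta> / \<eta>)\<^sup>2) * real (card D)" .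
qed

lemma Map_set_subset_of_control:
  fixes act :: "'m::monoid_mult \<Rightarrow> 'x \<Rightarrow> 'x" and \<sigma> :: "'m \<Rightarrow> 'd \<Rightarrow> 'd"
  assumes pm: "pseudometric \<rho>" and pm': "pseudometric \<rho>'"
    and D: "finite D" "D \<noteq> {}" "\<And>s v. v \<in> D \<Longrightarrow> \<sigma> s v \<in> D"
    and act_mult: "\<And>s m x. act (s * m) x = act s (act m x)"
    and F0: "finite F0" and "0 < \<eta>"
    and ctrl: "\<And>x y. \<forall>s\<in>F0. \<rho>' (act s x) (act s y) < \<eta> \<Longrightarrow> \<rho> x y < \<kappa>"
    and R: "\<And>x y. \<rho> x y \<le> R"
    and fibre: "\<And>m w. m \<in> F \<Longrightarrow> w \<in> D \<Longrightarrow> card {v\<in>D. \<sigma> m v = w} \<le> \<Delta>"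
    and ham: "\<And>s m. s \<in> F0 \<Longrightarrow> m \<in> F \<Longrightarrow> ham_dist D (\<sigma> (s * m)) (\<sigma> s \<circ> \<sigma> m) \<le> \<gamma>"
    and "0 \<le> \<delta>'" "0 \<le> \<delta>"
    and budget: "\<kappa>\<^sup>2 + R\<^sup>2 * real (card F0) * (\<gamma> + (1 + real \<Delta>) * (2 * \<delta>' / \<eta>)\<^sup>2) \<le> \<delta>\<^sup>2"
  shows "Map_set act \<rho>' (F0 \<union> (\<lambda>(s, m). s * m) ` (F0 \<times> F)) \<delta>' D \<sigma> \<subseteq> Map_set act \<rho> F \<delta> D \<sigma>"
proof
  fix \<phi> assume \<phi>: "\<phi> \<in> Map_set act \<rho>' (F0 \<union> (\<lambda>(s, m). s * m) ` (F0 \<times> F)) \<delta>' D \<sigma>"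
  have "rho2 D \<rho> (\<phi> \<circ> \<sigma> m) (\<lambda>v. act m (\<phi> v)) \<le> \<delta>" if "m \<in> F" for m
  proof -
    define B where "B = {v\<in>D. \<exists>s\<in>F0. \<eta> \<le> \<rho>' (act s (\<phi> (\<sigma> m v))) (act s (act m (\<phi> v)))}"
    have "real (card B) \<le> real (card F0) * ((\<gamma> + (1 + real \<Delta>) * (2 * \<delta>' / \<eta>)\<^sup>2) * real (card D))"
      unfolding B_def using that fibre ham \<open>0 \<le> \<delta>'\<close> \<open>0 < \<eta>\<close>
      by (intro Map_set_card_shifted_defects_le[OF pm' D act_mult \<phi> F0]) auto
    have "(\<Sum>v\<in>D. (\<rho> (\<phi> (\<sigma> m v)) (act m (\<phi> v)))\<^sup>2) \<le> \<kappa>\<^sup>2 * real (card D) + R\<^sup>2 * real (card B)"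
    proof (rule sum_sq_le_off_small_set[OF D(1)])
      fix v assume "v \<in> D - B"
      then show "\<rho> (\<phi> (\<sigma> m v)) (act m (\<phi> v)) < \<kappa>"
        unfolding B_def by (intro ctrl) (auto simp: not_le)
    qed (auto simp: B_def R pseudometric_nonneg[OF pm])
    also have "\<dots> \<le> (\<kappa>\<^sup>2 + R\<^sup>2 * real (card F0) * (\<gamma> + (1 + real \<Delta>) * (2 * \<delta>' / \<eta>)\<^sup>2)) * real (card D)"
      using mult_left_mono[OF \<open>real (card B) \<le> _\<close>, of "R\<^sup>2"] by (simp add: algebra_simps)
    also have "\<dots> \<le> \<delta>\<^sup>2 * real (card D)"
      using budget by (intro mult_right_mono) auto
    finally show ?thesis
      using rho2_le_iff[OF D(1,2) \<open>0 \<le> \<delta>\<close>, of \<rho> "\<phi> \<circ> \<sigma> m" "\<lambda>v. act m (\<phi> v)"] by simp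
  qed
  then show "\<phi> \<in> Map_set act \<rho> F \<delta> D \<sigma>"
    using \<phi> unfolding Map_set_def by auto
qed

lemma budget_parameters_exist:
  fixes R :: real
  assumes "\<delta> > 0" "\<eta> > 0"
  obtains \<gamma> \<delta>' where "\<gamma> > 0" "\<delta>' > 0"
    "(\<delta> / 2)\<^sup>2 + R\<^sup>2 * real n * (\<gamma> + (1 + real \<Delta>) * (2 * \<delta>' / \<eta>)\<^sup>2) \<le> \<delta>\<^sup>2"
proof -
  define K where "K = R\<^sup>2 * (real n + 1) * (2 + real \<Delta>) + 1"
  define \<gamma> where "\<gamma> = \<delta>\<^sup>2 / (2 * K)"
  define \<delta>' where "\<delta>' = \<eta> / 2 * sqrt \<gamma>"
  have "R\<^sup>2 * real n * (2 + real \<Delta>) \<le> R\<^sup>2 * (real n + 1) * (2 + real \<Delta>)"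
    by (intro mult_right_mono mult_left_mono) auto
  then have K: "R\<^sup>2 * real n * (2 + real \<Delta>) \<le> K" "K > 0"
    unfolding K_def by (auto intro: add_nonneg_pos)
  then have "\<gamma> > 0"
    unfolding \<gamma>_def using assms(1) by simp
  then have "\<delta>' > 0" and \<delta>'_sq: "(2 * \<delta>' / \<eta>)\<^sup>2 = \<gamma>"
    unfolding \<delta>'_def using assms(2) by simp_all
  have "R\<^sup>2 * real n * (2 + real \<Delta>) * \<gamma> \<le> K * \<gamma>"
    using K(1) \<open>\<gamma> > 0\<close> by (intro mult_right_mono) simp_all
  also have "\<dots> = \<delta>\<^sup>2 / 2"
    unfolding \<gamma>_def using K(2) by simp
  finally have "R\<^sup>2 * real n * (2 + real \<Delta>) * \<gamma> \<le> \<delta>\<^sup>2 / 2" .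
  moreover have "(\<delta> / 2)\<^sup>2 + R\<^sup>2 * real n * (\<gamma> + (1 + real \<Delta>) * \<gamma>)
      = \<delta>\<^sup>2 / 4 + R\<^sup>2 * real n * (2 + real \<Delta>) * \<gamma>"
    by (simp add: power_divide algebra_simps)
  ultimately show ?thesis
    using that[OF \<open>\<gamma> > 0\<close> \<open>\<delta>' > 0\<close>] zero_le_power2[of \<delta>] unfolding \<delta>'_sq by linarith
qed

lemma eventually_Map_set_subset:
  fixes act :: "'m::monoid_mult \<Rightarrow> 'x::topological_space \<Rightarrow> 'x" and \<sigma> :: "'i \<Rightarrow> 'm \<Rightarrow> 'd \<Rightarrow> 'd"
  assumes cpt: "compact (UNIV :: 'x set)" and act: "continuous_monoid_action act"
    and ssa: "strong_sofic_approx le D \<sigma>"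
    and cpm: "continuous_pseudometric \<rho>" and cpm': "continuous_pseudometric \<rho>'"
    and dg': "dynamically_generating act \<rho>'"
    and F: "finite F" and \<delta>: "\<delta> > 0"
  obtains F' \<delta>' where "finite F'" "\<delta>' > 0"
    "eventually (\<lambda>i. Map_set act \<rho>' F' \<delta>' (D i) (\<sigma> i) \<subseteq> Map_set act \<rho> F \<delta> (D i) (\<sigma> i)) (net_filter le)"
proof -
  obtain F0 \<eta> where F0: "finite F0" "\<eta> > 0"
    and ctrl: "\<And>x y. \<forall>s\<in>F0. \<rho>' (act s x) (act s y) < \<eta> \<Longrightarrow> \<rho> x y < \<delta> / 2"
    using dynamically_generating_control[OF cpt continuous_monoid_actionD(2)[OF act] cpm' dg' cpm, of "\<delta> / 2"] \<delta>
    by auto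
  obtain R where R: "\<And>x y. \<rho> x y \<le> R"
    using continuous_pseudometric_bounded[OF cpt cpm] by blast
  obtain \<Delta> where fibre: "\<And>i k v. k \<in> F \<Longrightarrow> v \<in> D i \<Longrightarrow> card {w\<in>D i. \<sigma> i k w = v} \<le> \<Delta>"
    using strong_sofic_approx_fibres_bounded[OF ssa F] by blast
  obtain \<gamma> \<delta>' where "\<gamma> > 0" "\<delta>' > 0"
    and budget: "(\<delta> / 2)\<^sup>2 + R\<^sup>2 * real (card F0) * (\<gamma> + (1 + real \<Delta>) * (2 * \<delta>' / \<eta>)\<^sup>2) \<le> \<delta>\<^sup>2"
    using budget_parameters_exist[OF \<delta> F0(2)] by blast
  have "\<forall>\<^sub>F i in net_filter le. \<forall>p\<in>F0 \<times> F. ham_dist (D i) (\<sigma> i (fst p * snd p)) (\<sigma> i (fst p) \<circ> \<sigma> i (snd p)) < \<gamma>"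
    using F F0(1) order_tendstoD(2)[OF strong_sofic_approxD(5)[OF ssa] \<open>\<gamma> > 0\<close>]
    by (intro eventually_ball_finite) auto
  then have "\<forall>\<^sub>F i in net_filter le.
      Map_set act \<rho>' (F0 \<union> (\<lambda>(s, m). s * m) ` (F0 \<times> F)) \<delta>' (D i) (\<sigma> i) \<subseteq> Map_set act \<rho> F \<delta> (D i) (\<sigma> i)"
  proof (rule eventually_mono)
    fix i
    assume "\<forall>p\<in>F0 \<times> F. ham_dist (D i) (\<sigma> i (fst p * snd p)) (\<sigma> i (fst p) \<circ> \<sigma> i (snd p)) < \<gamma>"
    then have ham: "ham_dist (D i) (\<sigma> i (s * m)) (\<sigma> i s \<circ> \<sigma> i m) \<le> \<gamma>" if "s \<in> F0" "m \<in> F" for s m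
      using that by fastforce
    have Di: "finite (D i)" "D i \<noteq> {}" "\<And>s v. v \<in> D i \<Longrightarrow> \<sigma> i s v \<in> D i"
      using strong_sofic_approxD[OF ssa] by auto
    have fibre_i: "\<And>m w. m \<in> F \<Longrightarrow> w \<in> D i \<Longrightarrow> card {v\<in>D i. \<sigma> i m v = w} \<le> \<Delta>"
      using fibre by blast
    show "Map_set act \<rho>' (F0 \<union> (\<lambda>(s, m). s * m) ` (F0 \<times> F)) \<delta>' (D i) (\<sigma> i) \<subseteq> Map_set act \<rho> F \<delta> (D i) (\<sigma> i)"
      using \<open>\<delta>' > 0\<close> \<delta>
      by (intro Map_set_subset_of_control[OF continuous_pseudometricD(1)[OF cpm] continuous_pseudometricD(1)[OF cpm']
            Di continuous_monoid_actionD(1)[OF act] F0 ctrl R fibre_i ham _ _ budget]) simp_all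
  qed
  moreover have "finite (F0 \<union> (\<lambda>(s, m). s * m) ` (F0 \<times> F))"
    using F F0(1) by simp
  ultimately show ?thesis
    using \<open>\<delta>' > 0\<close> that by blast
qed

section \<open>Separated sets\<close>

lemma rho_inf_ge:
  "finite D \<Longrightarrow> v \<in> D \<Longrightarrow> \<rho> (\<phi> v) (\<psi> v) \<le> rho_inf D \<rho> \<phi> \<psi>"
  unfolding rho_inf_def by (intro Max_ge) auto

lemma rho_inf_attained:
  assumes "finite D" "D \<noteq> {}"
  obtains v where "v \<in> D" "rho_inf D \<rho> \<phi> \<psi> = \<rho> (\<phi> v) (\<psi> v)"
proof -
  have "rho_inf D \<rho> \<phi> \<psi> \<in> (\<lambda>v. \<rho> (\<phi> v) (\<psi> v)) ` D"
    unfolding rho_inf_def using assms by (intro Max_in) auto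
  then show ?thesis
    using that by blast
qed

lemma sep_number_ge_card:
  assumes "S \<subseteq> Z" "finite S" "\<And>a b. a \<in> S \<Longrightarrow> b \<in> S \<Longrightarrow> a \<noteq> b \<Longrightarrow> \<epsilon> \<le> d a b"
  shows "ereal (real (card S)) \<le> sep_number \<epsilon> Z d"
  unfolding sep_number_def by (rule SUP_upper) (use assms in auto)

lemma sep_number_nonneg: "0 \<le> sep_number \<epsilon> Z d"
  using sep_number_ge_card[of "{}" Z] by (simp add: zero_ereal_def)

lemma sep_number_mono: "Z \<subseteq> Z' \<Longrightarrow> sep_number \<epsilon> Z d \<le> sep_number \<epsilon> Z' d"
  unfolding sep_number_def by (rule SUP_subset_mono) auto

lemma sep_number_le_by_labelling:
  assumes W: "finite W" "W \<noteq> {}" and lab: "\<And>\<phi>. \<phi> \<in> Z \<Longrightarrow> lab \<phi> \<in> W"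
    and fibre: "\<And>\<phi> \<psi>. \<phi> \<in> Z \<Longrightarrow> \<psi> \<in> Z \<Longrightarrow> lab \<phi> = lab \<psi> \<Longrightarrow> \<epsilon> \<le> d' \<phi> \<psi> \<Longrightarrow> \<eta> \<le> d \<phi> \<psi>"
  shows "sep_number \<epsilon> Z d' \<le> ereal (real (card W)) * sep_number \<eta> Z d"
  unfolding sep_number_def[of \<epsilon>]
proof (rule SUP_least, safe)
  fix S assume S: "S \<subseteq> Z" "finite S" and sep: "\<forall>a\<in>S. \<forall>b\<in>S. a \<noteq> b \<longrightarrow> \<epsilon> \<le> d' a b"
  define N where "N = sep_number \<eta> Z d"
  have fibre_le: "ereal (real (card {\<phi>\<in>S. lab \<phi> = w})) \<le> N" for w
    unfolding N_def using S sep by (intro sep_number_ge_card) (auto intro: fibre)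
  show "ereal (real (card S)) \<le> ereal (real (card W)) * N"
  proof (cases N)
    case (real r)
    have "S = (\<Union>w\<in>lab ` S. {\<phi>\<in>S. lab \<phi> = w})"
      by auto
    then have "card S \<le> (\<Sum>w\<in>lab ` S. card {\<phi>\<in>S. lab \<phi> = w})"
      using card_UN_le[of "lab ` S" "\<lambda>w. {\<phi>\<in>S. lab \<phi> = w}"] S(2) by simp
    then have "real (card S) \<le> (\<Sum>w\<in>lab ` S. real (card {\<phi>\<in>S. lab \<phi> = w}))"
      unfolding of_nat_sum[symmetric] of_nat_le_iff .
    also have "\<dots> \<le> (\<Sum>w\<in>lab ` S. r)"
      using fibre_le real by (intro sum_mono) simp
    also have "\<dots> \<le> real (card W) * r"
    proof -
      have "lab ` S \<subseteq> W"
        using lab S(1) by blast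
      then show ?thesis
        using real sep_number_nonneg[of \<eta> Z d] W(1) unfolding N_def
        by (auto intro!: mult_right_mono card_mono)
    qed
    finally show ?thesis
      using real by simp
  next
    case PInf
    then show ?thesis
      using W by (simp add: card_gt_0_iff)
  qed (use sep_number_nonneg[of \<eta> Z d] N_def in simp)
qed

lemma rho_inf_ge_of_control:
  fixes act :: "'m \<Rightarrow> 'x \<Rightarrow> 'x" and \<sigma> :: "'m \<Rightarrow> 'd \<Rightarrow> 'd" and \<rho>' :: "'x \<Rightarrow> 'x \<Rightarrow> real"
  assumes pm: "pseudometric \<rho>" and "finite D" "v \<in> D" "\<And>s. \<sigma> s v \<in> D"
    and ctrl: "\<And>x y. \<forall>s\<in>F. \<rho> (act s x) (act s y) < \<eta> \<Longrightarrow> \<rho>' x y < \<epsilon>"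
    and "\<epsilon> \<le> \<rho>' (\<phi> v) (\<psi> v)"
    and "\<forall>s\<in>F. \<rho> (\<phi> (\<sigma> s v)) (act s (\<phi> v)) < \<eta> / 3" "\<forall>s\<in>F. \<rho> (\<psi> (\<sigma> s v)) (act s (\<psi> v)) < \<eta> / 3"
  shows "\<eta> / 3 \<le> rho_inf D \<rho> \<phi> \<psi>"
proof -
  have "\<not> (\<forall>s\<in>F. \<rho> (act s (\<phi> v)) (act s (\<psi> v)) < \<eta>)"
  proof
    assume "\<forall>s\<in>F. \<rho> (act s (\<phi> v)) (act s (\<psi> v)) < \<eta>"
    then have "\<rho>' (\<phi> v) (\<psi> v) < \<epsilon>"
      by (rule ctrl)
    then show False
      using assms(6) by linarith
  qed
  then obtain s where s: "s \<in> F" "\<eta> \<le> \<rho> (act s (\<phi> v)) (act s (\<psi> v))"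
    by (auto simp: not_less)
  have "\<rho> (act s (\<phi> v)) (act s (\<psi> v))
      \<le> \<rho> (\<phi> (\<sigma> s v)) (act s (\<phi> v)) + \<rho> (\<phi> (\<sigma> s v)) (\<psi> (\<sigma> s v)) + \<rho> (\<psi> (\<sigma> s v)) (act s (\<psi> v))"
    using pseudometric_triangle[OF pm, of "act s (\<phi> v)" "act s (\<psi> v)" "\<phi> (\<sigma> s v)"]
      pseudometric_triangle[OF pm, of "\<phi> (\<sigma> s v)" "act s (\<psi> v)" "\<psi> (\<sigma> s v)"]
      pseudometric_sym[OF pm, of "act s (\<phi> v)" "\<phi> (\<sigma> s v)"] by linarith
  moreover have "\<rho> (\<phi> (\<sigma> s v)) (\<psi> (\<sigma> s v)) \<le> rho_inf D \<rho> \<phi> \<psi>"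
    by (rule rho_inf_ge[OF assms(2,4)])
  ultimately show ?thesis
    using s assms(7,8) by fastforce
qed

lemma sep_number_Map_set_le:
  fixes act :: "'m \<Rightarrow> 'x \<Rightarrow> 'x" and \<sigma> :: "'m \<Rightarrow> 'd \<Rightarrow> 'd" and cell :: "'x \<Rightarrow> 'c"
  assumes pm: "pseudometric \<rho>"
    and D: "finite D" "D \<noteq> {}" "\<And>s v. v \<in> D \<Longrightarrow> \<sigma> s v \<in> D"
    and F: "finite F" and \<eta>: "\<eta> > 0"
    and ctrl: "\<And>x y. \<forall>s\<in>F. \<rho> (act s x) (act s y) < \<eta> \<Longrightarrow> \<rho>' x y < \<epsilon>"
    and cell: "finite (range cell)" "\<And>x y. cell x = cell y \<Longrightarrow> \<rho>' x y < \<epsilon>"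
    and \<delta>: "0 \<le> \<delta>" and Z: "Z \<subseteq> Map_set act \<rho> F \<delta> D \<sigma>"
  shows "sep_number \<epsilon> Z (rho_inf D \<rho>')
    \<le> ereal (real (card (sparse_patterns D (insert None (Some ` range cell)) None
                         (real (card F) * (3 * \<delta> / \<eta>)\<^sup>2 * real (card D)))))
       * sep_number (\<eta> / 3) Z (rho_inf D \<rho>)"
proof -
  define b where "b = real (card F) * (3 * \<delta> / \<eta>)\<^sup>2 * real (card D)"
  define bad where "bad \<phi> = {v\<in>D. \<exists>s\<in>F. \<eta> / 3 \<le> \<rho> (\<phi> (\<sigma> s v)) (act s (\<phi> v))}" for \<phi> :: "'d \<Rightarrow> 'x"
  define pat where "pat \<phi> = (\<lambda>v\<in>D. if v \<in> bad \<phi> then Some (cell (\<phi> v)) else None)" for \<phi>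
  have "sep_number \<epsilon> Z (rho_inf D \<rho>')
      \<le> ereal (real (card (sparse_patterns D (insert None (Some ` range cell)) None b)))
         * sep_number (\<eta> / 3) Z (rho_inf D \<rho>)"
  proof (rule sep_number_le_by_labelling)
    show "finite (sparse_patterns D (insert None (Some ` range cell)) None b)"
      using D(1) cell(1) by (simp add: finite_sparse_patterns)
    have "0 \<le> b"
      unfolding b_def by simp
    then show "sparse_patterns D (insert None (Some ` range cell)) None b \<noteq> {}"
      using const_in_sparse_patterns[of None "insert None (Some ` range cell)" b D] by auto
  next
    fix \<phi> assume "\<phi> \<in> Z"
    have "real (card (bad \<phi>)) \<le> real (card F) * (\<delta> / (\<eta> / 3))\<^sup>2 * real (card D)"
      unfolding bad_def using \<open>\<phi> \<in> Z\<close> Z \<eta> by (intro Map_set_card_defects_le[OF D(1,2) \<delta> _ F]) auto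
    also have "\<delta> / (\<eta> / 3) = 3 * \<delta> / \<eta>"
      by simp
    finally have "real (card (bad \<phi>)) \<le> b"
      unfolding b_def .
    moreover have "{v\<in>D. pat \<phi> v \<noteq> None} = bad \<phi>"
      unfolding pat_def bad_def by auto
    ultimately show "pat \<phi> \<in> sparse_patterns D (insert None (Some ` range cell)) None b"
      unfolding sparse_patterns_def by (auto simp: pat_def)
  next
    fix \<phi> \<psi> assume "\<phi> \<in> Z" "\<psi> \<in> Z" "pat \<phi> = pat \<psi>" "\<epsilon> \<le> rho_inf D \<rho>' \<phi> \<psi>"
    obtain v where "v \<in> D" "rho_inf D \<rho>' \<phi> \<psi> = \<rho>' (\<phi> v) (\<psi> v)"
      by (rule rho_inf_attained[OF D(1,2)])
    with \<open>\<epsilon> \<le> rho_inf D \<rho>' \<phi> \<psi>\<close> have v: "v \<in> D" "\<epsilon> \<le> \<rho>' (\<phi> v) (\<psi> v)"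
      by simp_all
    \<comment> \<open>\<open>v\<close> is good for both maps: at a bad point the common pattern would put \<open>\<phi> v\<close> and \<open>\<psi> v\<close> into one cell\<close>
    have "pat \<phi> v = pat \<psi> v"
      using \<open>pat \<phi> = pat \<psi>\<close> by simp
    then have "v \<notin> bad \<phi>" "v \<notin> bad \<psi>"
      using v cell(2)[of "\<phi> v" "\<psi> v"] unfolding pat_def by (simp_all split: if_splits)
    then show "\<eta> / 3 \<le> rho_inf D \<rho> \<phi> \<psi>"
      using v unfolding bad_def by (intro rho_inf_ge_of_control[where \<sigma>=\<sigma>, OF pm D(1) v(1) D(3)[OF v(1)] ctrl]) auto
  qed
  then show ?thesis
    unfolding b_def .
qed

section \<open>Comparison of sofic entropies\<close>

text \<open>\<open>sofic_sep_rate \<dots> \<rho> \<epsilon> F \<delta>\<close> and \<open>sofic_entropy_at \<dots> \<rho> \<epsilon>\<close> are the quantities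
  \<open>h\<^sup>\<epsilon>\<^sub>\<Sigma>\<^sub>,\<^sub>\<infinity>(\<rho>, F, \<delta>)\<close> and \<open>h\<^sup>\<epsilon>\<^sub>\<Sigma>\<^sub>,\<^sub>\<infinity>(\<rho>)\<close> whose supremum over \<open>\<epsilon>\<close> is the sofic entropy.\<close>

definition sofic_sep_rate ::
  "('i \<Rightarrow> 'i \<Rightarrow> bool) \<Rightarrow> ('i \<Rightarrow> 'd set) \<Rightarrow> ('i \<Rightarrow> 'm \<Rightarrow> 'd \<Rightarrow> 'd)
     \<Rightarrow> ('m \<Rightarrow> 'x \<Rightarrow> 'x) \<Rightarrow> ('x \<Rightarrow> 'x \<Rightarrow> real) \<Rightarrow> real \<Rightarrow> 'm set \<Rightarrow> real \<Rightarrow> ereal" where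
  "sofic_sep_rate le D \<sigma> act \<rho> \<epsilon> F \<delta> =
     Limsup (net_filter le) (\<lambda>i. ereal (1 / real (card (D i))) *
       elog (sep_number \<epsilon> (Map_set act \<rho> F \<delta> (D i) (\<sigma> i)) (rho_inf (D i) \<rho>)))"

definition sofic_entropy_at ::
  "('i \<Rightarrow> 'i \<Rightarrow> bool) \<Rightarrow> ('i \<Rightarrow> 'd set) \<Rightarrow> ('i \<Rightarrow> 'm \<Rightarrow> 'd \<Rightarrow> 'd)
     \<Rightarrow> ('m \<Rightarrow> 'x \<Rightarrow> 'x) \<Rightarrow> ('x \<Rightarrow> 'x \<Rightarrow> real) \<Rightarrow> real \<Rightarrow> ereal" where
  "sofic_entropy_at le D \<sigma> act \<rho> \<epsilon> =
     (INF F\<in>{F. finite F}. INF \<delta>\<in>{0<..}. sofic_sep_rate le D \<sigma> act \<rho> \<epsilon> F \<delta>)"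

lemma sofic_entropy_eq_SUP_sofic_entropy_at:
  "sofic_entropy le D \<sigma> act \<rho> = (SUP \<epsilon>\<in>{0<..}. sofic_entropy_at le D \<sigma> act \<rho> \<epsilon>)"
  unfolding sofic_entropy_def sofic_entropy_at_def sofic_sep_rate_def ..

lemma elog_le_ln_add_elog:
  assumes "0 \<le> x" "x \<le> ereal c * y" "1 \<le> c"
  shows "elog x \<le> ereal (ln c) + elog y"
proof (cases "x = 0 \<or> y = \<infinity>")
  case False
  then obtain r s where r: "y = ereal r" and s: "x = ereal s" "0 < s" "s \<le> c * r"
    using assms by (cases x; cases y) (auto simp: zero_ereal_def)
  then have "0 < c * r"
    by linarith
  then have "0 < r"
    using assms(3) by (simp add: zero_less_mult_iff)
  have "ln s \<le> ln (c * r)"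
    using s by simp
  also have "\<dots> = ln c + ln r"
    using assms(3) \<open>0 < r\<close> by (simp add: ln_mult)
  finally have "ln s \<le> ln c + ln r" .
  then show ?thesis
    unfolding elog_def using s r \<open>0 < r\<close> by simp
qed (auto simp: elog_def)

lemma normalized_elog_le:
  assumes "finite D" "D \<noteq> {}" "0 \<le> x" "x \<le> ereal (real k) * y" "1 \<le> k"
    and "ln (real k) \<le> \<theta> * real (card D)"
  shows "ereal (1 / real (card D)) * elog x \<le> ereal \<theta> + ereal (1 / real (card D)) * elog y"
proof -
  have n: "0 < real (card D)"
    using assms(1,2) by (simp add: card_gt_0_iff)
  have "ereal (1 / real (card D)) * elog x \<le> ereal (1 / real (card D)) * (ereal (ln (real k)) + elog y)"
    using elog_le_ln_add_elog[OF assms(3,4)] assms(5) by (intro ereal_mult_left_mono) simp_all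
  also have "\<dots> = ereal (ln (real k) / real (card D)) + ereal (1 / real (card D)) * elog y"
    by (simp add: ereal_distrib_left)
  also have "\<dots> \<le> ereal \<theta> + ereal (1 / real (card D)) * elog y"
    using assms(6) n by (intro add_right_mono) (simp add: divide_le_eq)
  finally show ?thesis .
qed

lemma normalized_elog_sep_number_le:
  fixes act :: "'m \<Rightarrow> 'x \<Rightarrow> 'x" and \<sigma> :: "'m \<Rightarrow> 'd \<Rightarrow> 'd" and cell :: "'x \<Rightarrow> 'c"
  assumes pm: "pseudometric \<rho>"
    and D: "finite D" "D \<noteq> {}" "\<And>s v. v \<in> D \<Longrightarrow> \<sigma> s v \<in> D"
    and F0: "finite F0" "\<eta> > 0"
    and ctrl: "\<And>x y. \<forall>s\<in>F0. \<rho> (act s x) (act s y) < \<eta> \<Longrightarrow> \<rho>' x y < \<epsilon>"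
    and cell: "finite (range cell)" "\<And>x y. cell x = cell y \<Longrightarrow> \<rho>' x y < \<epsilon>"
    and "0 \<le> \<delta>0"
    and patterns: "ln (real (card (sparse_patterns D (insert None (Some ` range cell)) None
                     (real (card F0) * (3 * \<delta>0 / \<eta>)\<^sup>2 * real (card D))))) \<le> \<theta> * real (card D)"
    and Z: "Z \<subseteq> Map_set act \<rho> F0 \<delta>0 D \<sigma>" "Z \<subseteq> Map_set act \<rho> F \<delta> D \<sigma>"
  shows "ereal (1 / real (card D)) * elog (sep_number \<epsilon> Z (rho_inf D \<rho>'))
           \<le> ereal \<theta> + ereal (1 / real (card D)) * elog (sep_number (\<eta> / 3) (Map_set act \<rho> F \<delta> D \<sigma>) (rho_inf D \<rho>))"
proof -
  define W where "W = sparse_patterns D (insert None (Some ` range cell)) None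
                        (real (card F0) * (3 * \<delta>0 / \<eta>)\<^sup>2 * real (card D))"
  have "sep_number \<epsilon> Z (rho_inf D \<rho>') \<le> ereal (real (card W)) * sep_number (\<eta> / 3) Z (rho_inf D \<rho>)"
    unfolding W_def by (rule sep_number_Map_set_le[OF pm D F0 ctrl cell \<open>0 \<le> \<delta>0\<close> Z(1)])
  also have "\<dots> \<le> ereal (real (card W)) * sep_number (\<eta> / 3) (Map_set act \<rho> F \<delta> D \<sigma>) (rho_inf D \<rho>)"
    using Z(2) by (intro ereal_mult_left_mono sep_number_mono) simp_all
  finally have sep: "sep_number \<epsilon> Z (rho_inf D \<rho>')
      \<le> ereal (real (card W)) * sep_number (\<eta> / 3) (Map_set act \<rho> F \<delta> D \<sigma>) (rho_inf D \<rho>)" .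
  have "(\<lambda>v\<in>D. None) \<in> W"
    unfolding W_def by (rule const_in_sparse_patterns) simp_all
  moreover have "finite W"
    unfolding W_def using D(1) cell(1) by (simp add: finite_sparse_patterns)
  ultimately have "1 \<le> card W"
    by (auto simp: Suc_le_eq card_gt_0_iff)
  then show ?thesis
    using patterns unfolding W_def[symmetric]
    by (intro normalized_elog_le[OF D(1,2) sep_number_nonneg sep]) simp_all
qed

lemma sofic_sep_rate_le:
  fixes act :: "'m::monoid_mult \<Rightarrow> 'x \<Rightarrow> 'x" and \<sigma> :: "'i \<Rightarrow> 'm \<Rightarrow> 'd \<Rightarrow> 'd" and cell :: "'x \<Rightarrow> 'c"
  assumes ssa: "strong_sofic_approx le D \<sigma>" and pm: "pseudometric \<rho>"
    and F0: "finite F0" "\<eta> > 0"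
    and ctrl: "\<And>x y. \<forall>s\<in>F0. \<rho> (act s x) (act s y) < \<eta> \<Longrightarrow> \<rho>' x y < \<epsilon>"
    and cell: "finite (range cell)" "\<And>x y. cell x = cell y \<Longrightarrow> \<rho>' x y < \<epsilon>"
    and "0 \<le> \<delta>0"
    and patterns: "\<And>i. ln (real (card (sparse_patterns (D i) (insert None (Some ` range cell)) None
                      (real (card F0) * (3 * \<delta>0 / \<eta>)\<^sup>2 * real (card (D i)))))) \<le> \<theta> * real (card (D i))"
    and incl: "eventually (\<lambda>i. Map_set act \<rho>' F' \<delta>' (D i) (\<sigma> i)
                 \<subseteq> Map_set act \<rho> (F \<union> F0) (min \<delta> \<delta>0) (D i) (\<sigma> i)) (net_filter le)"
  shows "sofic_sep_rate le D \<sigma> act \<rho>' \<epsilon> F' \<delta>' \<le> ereal \<theta> + sofic_sep_rate le D \<sigma> act \<rho> (\<eta> / 3) F \<delta>"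
proof -
  define r where "r i = ereal (1 / real (card (D i))) *
    elog (sep_number (\<eta> / 3) (Map_set act \<rho> F \<delta> (D i) (\<sigma> i)) (rho_inf (D i) \<rho>))" for i
  have "\<forall>\<^sub>F i in net_filter le. ereal (1 / real (card (D i))) *
      elog (sep_number \<epsilon> (Map_set act \<rho>' F' \<delta>' (D i) (\<sigma> i)) (rho_inf (D i) \<rho>')) \<le> ereal \<theta> + r i"
  proof (rule eventually_mono[OF incl])
    fix i
    assume "Map_set act \<rho>' F' \<delta>' (D i) (\<sigma> i) \<subseteq> Map_set act \<rho> (F \<union> F0) (min \<delta> \<delta>0) (D i) (\<sigma> i)"
    moreover have "Map_set act \<rho> (F \<union> F0) (min \<delta> \<delta>0) (D i) (\<sigma> i) \<subseteq> Map_set act \<rho> F0 \<delta>0 (D i) (\<sigma> i)"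
      and "Map_set act \<rho> (F \<union> F0) (min \<delta> \<delta>0) (D i) (\<sigma> i) \<subseteq> Map_set act \<rho> F \<delta> (D i) (\<sigma> i)"
      by (rule Map_set_mono; simp)+
    moreover have Di: "finite (D i)" "D i \<noteq> {}" "\<And>s v. v \<in> D i \<Longrightarrow> \<sigma> i s v \<in> D i"
      using strong_sofic_approxD[OF ssa] by auto
    ultimately show "ereal (1 / real (card (D i))) *
        elog (sep_number \<epsilon> (Map_set act \<rho>' F' \<delta>' (D i) (\<sigma> i)) (rho_inf (D i) \<rho>')) \<le> ereal \<theta> + r i"
      unfolding r_def
      by (intro normalized_elog_sep_number_le[OF pm Di F0 ctrl cell \<open>0 \<le> \<delta>0\<close> patterns]) auto
  qed
  then have "sofic_sep_rate le D \<sigma> act \<rho>' \<epsilon> F' \<delta>' \<le> Limsup (net_filter le) (\<lambda>i. ereal \<theta> + r i)"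
    unfolding sofic_sep_rate_def by (rule Limsup_mono)
  also have "\<dots> = ereal \<theta> + sofic_sep_rate le D \<sigma> act \<rho> (\<eta> / 3) F \<delta>"
    unfolding sofic_sep_rate_def r_def
    by (rule Limsup_add_ereal_left[OF net_filter_ne_bot[OF strong_sofic_approxD(1)[OF ssa]]]) simp
  finally show ?thesis .
qed

lemma sofic_entropy_at_le:
  fixes act :: "'m::monoid_mult \<Rightarrow> 'x::topological_space \<Rightarrow> 'x" and \<sigma> :: "'i \<Rightarrow> 'm \<Rightarrow> 'd \<Rightarrow> 'd"
    and cell :: "'x \<Rightarrow> 'c"
  assumes cpt: "compact (UNIV :: 'x set)" and act: "continuous_monoid_action act"
    and ssa: "strong_sofic_approx le D \<sigma>"
    and cpm: "continuous_pseudometric \<rho>" and cpm': "continuous_pseudometric \<rho>'"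
    and dg': "dynamically_generating act \<rho>'"
    and F0: "finite F0" "\<eta> > 0"
    and ctrl: "\<And>x y. \<forall>s\<in>F0. \<rho> (act s x) (act s y) < \<eta> \<Longrightarrow> \<rho>' x y < \<epsilon>"
    and cell: "finite (range cell)" "\<And>x y. cell x = cell y \<Longrightarrow> \<rho>' x y < \<epsilon>"
    and "0 < \<delta>0"
    and patterns: "\<And>i. ln (real (card (sparse_patterns (D i) (insert None (Some ` range cell)) None
                      (real (card F0) * (3 * \<delta>0 / \<eta>)\<^sup>2 * real (card (D i)))))) \<le> \<theta> * real (card (D i))"
  shows "sofic_entropy_at le D \<sigma> act \<rho>' \<epsilon> \<le> sofic_entropy_at le D \<sigma> act \<rho> (\<eta> / 3) + ereal \<theta>"
proof -
  have "sofic_entropy_at le D \<sigma> act \<rho>' \<epsilon> - ereal \<theta> \<le> sofic_sep_rate le D \<sigma> act \<rho> (\<eta> / 3) F \<delta>"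
    if "finite F" "\<delta> > 0" for F \<delta>
  proof -
    have "finite (F \<union> F0)" "min \<delta> \<delta>0 > 0"
      using that F0(1) \<open>0 < \<delta>0\<close> by auto
    then obtain F' \<delta>' where "finite F'" "\<delta>' > 0" and incl: "\<forall>\<^sub>F i in net_filter le.
        Map_set act \<rho>' F' \<delta>' (D i) (\<sigma> i) \<subseteq> Map_set act \<rho> (F \<union> F0) (min \<delta> \<delta>0) (D i) (\<sigma> i)"
      by (rule eventually_Map_set_subset[OF cpt act ssa cpm cpm' dg'])
    have "sofic_entropy_at le D \<sigma> act \<rho>' \<epsilon> \<le> sofic_sep_rate le D \<sigma> act \<rho>' \<epsilon> F' \<delta>'"
      unfolding sofic_entropy_at_def using \<open>finite F'\<close> \<open>\<delta>' > 0\<close> by (intro INF_lower2[of F'] INF_lower) auto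
    also have "\<dots> \<le> ereal \<theta> + sofic_sep_rate le D \<sigma> act \<rho> (\<eta> / 3) F \<delta>"
      by (rule sofic_sep_rate_le[OF ssa continuous_pseudometricD(1)[OF cpm] F0 ctrl cell
            less_imp_le[OF \<open>0 < \<delta>0\<close>] patterns incl])
    finally show ?thesis
      by (simp add: ereal_minus_le add.commute)
  qed
  then have "sofic_entropy_at le D \<sigma> act \<rho>' \<epsilon> - ereal \<theta> \<le> sofic_entropy_at le D \<sigma> act \<rho> (\<eta> / 3)"
    unfolding sofic_entropy_at_def[of _ _ _ _ \<rho>] by (intro INF_greatest) auto
  then show ?thesis
    by (simp add: ereal_minus_le)
qed

lemma scale_parameter_exists:
  assumes "\<beta> > 0" "\<eta> > 0"
  obtains \<delta>0 :: real where "\<delta>0 > 0" "real n * (3 * \<delta>0 / \<eta>)\<^sup>2 \<le> \<beta>"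
proof
  define \<delta>0 where "\<delta>0 = \<eta> / 3 * sqrt (\<beta> / (real n + 1))"
  show "\<delta>0 > 0"
    unfolding \<delta>0_def using assms by (simp add: add_pos_nonneg)
  have "real n * (3 * \<delta>0 / \<eta>)\<^sup>2 = \<beta> * (real n / (real n + 1))"
    unfolding \<delta>0_def using assms by (simp add: power_divide)
  also have "\<dots> \<le> \<beta>"
    using assms(1) by (intro mult_left_le) simp_all
  finally show "real n * (3 * \<delta>0 / \<eta>)\<^sup>2 \<le> \<beta>" .
qed

lemma sofic_entropy_le:
  fixes act :: "'m::monoid_mult \<Rightarrow> 'x::topological_space \<Rightarrow> 'x" and \<sigma> :: "'i \<Rightarrow> 'm \<Rightarrow> 'd \<Rightarrow> 'd"
  assumes cpt: "compact (UNIV :: 'x set)" and act: "continuous_monoid_action act"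
    and ssa: "strong_sofic_approx le D \<sigma>"
    and cpm: "continuous_pseudometric \<rho>" and dg: "dynamically_generating act \<rho>"
    and cpm': "continuous_pseudometric \<rho>'" and dg': "dynamically_generating act \<rho>'"
  shows "sofic_entropy le D \<sigma> act \<rho>' \<le> sofic_entropy le D \<sigma> act \<rho>"
  unfolding sofic_entropy_eq_SUP_sofic_entropy_at
proof (rule SUP_least, rule ereal_le_epsilon2)
  fix \<epsilon> :: real and \<theta> :: real
  assume "\<epsilon> \<in> {0<..}" "0 < \<theta>"
  obtain F0 \<eta> where F0: "finite F0" "\<eta> > 0"
    and ctrl: "\<And>x y. \<forall>s\<in>F0. \<rho> (act s x) (act s y) < \<eta> \<Longrightarrow> \<rho>' x y < \<epsilon>"
    using dynamically_generating_control[OF cpt continuous_monoid_actionD(2)[OF act] cpm dg cpm', of \<epsilon>]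
      \<open>\<epsilon> \<in> {0<..}\<close> by auto
  obtain cell :: "'x \<Rightarrow> 'x" where cell: "finite (range cell)" "\<And>x y. cell x = cell y \<Longrightarrow> \<rho>' x y < \<epsilon>"
    using continuous_pseudometric_finite_partition[OF cpt cpm', of \<epsilon>] \<open>\<epsilon> \<in> {0<..}\<close> by auto
  obtain \<beta> where "\<beta> > 0" and growth: "\<And>(E :: 'd set) b. finite E \<Longrightarrow> 0 \<le> b \<Longrightarrow> b \<le> \<beta> * real (card E) \<Longrightarrow>
      ln (real (card (sparse_patterns E (insert None (Some ` range cell)) None b))) \<le> \<theta> * real (card E)"
    using sparse_patterns_small_growth[of "insert None (Some ` range cell)" None \<theta>] cell(1) \<open>0 < \<theta>\<close>
    by auto
  obtain \<delta>0 where "\<delta>0 > 0" and \<delta>0: "real (card F0) * (3 * \<delta>0 / \<eta>)\<^sup>2 \<le> \<beta>"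
    using scale_parameter_exists[OF \<open>\<beta> > 0\<close> F0(2)] by blast
  have patterns: "ln (real (card (sparse_patterns (D i) (insert None (Some ` range cell)) None
      (real (card F0) * (3 * \<delta>0 / \<eta>)\<^sup>2 * real (card (D i)))))) \<le> \<theta> * real (card (D i))" for i
    using strong_sofic_approxD(2)[OF ssa] \<delta>0 by (intro growth mult_right_mono) auto
  have "sofic_entropy_at le D \<sigma> act \<rho>' \<epsilon> \<le> sofic_entropy_at le D \<sigma> act \<rho> (\<eta> / 3) + ereal \<theta>"
    by (rule sofic_entropy_at_le[OF cpt act ssa cpm cpm' dg' F0 ctrl cell \<open>0 < \<delta>0\<close> patterns])
  also have "\<dots> \<le> (SUP e\<in>{0<..}. sofic_entropy_at le D \<sigma> act \<rho> e) + ereal \<theta>"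
    using F0(2) by (intro add_right_mono SUP_upper) simp
  finally show "sofic_entropy_at le D \<sigma> act \<rho>' \<epsilon> \<le> (SUP e\<in>{0<..}. sofic_entropy_at le D \<sigma> act \<rho> e) + ereal \<theta>" .
qed

theorem proposition4p6:
  fixes act :: "'m::monoid_mult \<Rightarrow> 'x::topological_space \<Rightarrow> 'x"
    and le :: "'i \<Rightarrow> 'i \<Rightarrow> bool"
    and D :: "'i \<Rightarrow> 'd set"
    and \<sigma> :: "'i \<Rightarrow> 'm \<Rightarrow> 'd \<Rightarrow> 'd"
    and \<rho> \<rho>' :: "'x \<Rightarrow> 'x \<Rightarrow> real"
  assumes "compact (UNIV :: 'x set)"
    and "continuous_monoid_action act"
    and "infinite (UNIV :: 'm set)"
    and "strongly_sofic TYPE('m)"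
    and "strong_sofic_approx le D \<sigma>"
    and "continuous_pseudometric \<rho>" and "dynamically_generating act \<rho>"
    and "continuous_pseudometric \<rho>'" and "dynamically_generating act \<rho>'"
  shows "sofic_entropy le D \<sigma> act \<rho> = sofic_entropy le D \<sigma> act \<rho>'"
proof (rule antisym)
  show "sofic_entropy le D \<sigma> act \<rho> \<le> sofic_entropy le D \<sigma> act \<rho>'"
    by (rule sofic_entropy_le[OF assms(1,2,5,8,9,6,7)])
  show "sofic_entropy le D \<sigma> act \<rho>' \<le> sofic_entropy le D \<sigma> act \<rho>"
    by (rule sofic_entropy_le[OF assms(1,2,5,6,7,8,9)])
qed

end
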